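(* Let $(X,G)$ be a minimal topological dynamical system and let $Y=\{y\in X_{eq}:\pi_{eq}^{-1}(y)\in\mathcal X_{eq}^{\mathrm{meas}}\}$. Then $Y$ is a dense $G_\delta$ subset of $X_{eq}$ with $\nu_{eq}(Y)=1$.
   Context: $G$ is an infinite countable discrete group; a tds $(X,G)$ is a compact metric space with a $G$-action by homeomorphisms; minimal means no proper nonempty closed invariant subset. $\pi_{eq}:X\to X_{eq}$ is the factor map onto the maximal equicontinuous factor, $\nu_{eq}$ the unique invariant probability measure of $(X_{eq},G)$. $2^X$ is the space of nonempty closed subsets with the Hausdorff metric $d_H$. $\mathcal X=\overline{\{\pi_{eq}^{-1}(y):y\in X_{eq}\}}\subset 2^X$; for $E\in\mathcal X$, $\pi_{\mathcal X}(E)$ is the single point $\pi_{eq}(E)$. $\mathcal X_{eq}^{\mathrm{meas}}=\{E\in\mathcal X:\nu_{eq}(\pi_{\mathcal X}(B^{\mathcal X}_\epsilon(E)))>0\ \forall\epsilon>0\}$, $B^{\mathcal X}_\epsilon(E)$ the open $d_H$-ball in $\mathcal X$. *)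

theory Defs
  imports "HOL-Analysis.Analysis" "HOL-Probability.Probability"
begin

text \<open>The group G is a type of class group_add (written additively, NOT assumed
commutative), countable; infinitude is an explicit hypothesis of the theorem.\<close>

definition tds :: "'x::metric_space set \<Rightarrow> ('g::group_add \<Rightarrow> 'x \<Rightarrow> 'x) \<Rightarrow> bool" where
  "tds X act \<longleftrightarrow> compact X \<and> X \<noteq> {} \<and>
     (\<forall>g. continuous_on X (act g) \<and> act g ` X \<subseteq> X) \<and>
     (\<forall>x\<in>X. act 0 x = x) \<and>
     (\<forall>g h. \<forall>x\<in>X. act (g + h) x = act g (act h x))"

definition minimal_tds :: "'x::metric_space set \<Rightarrow> ('g::group_add \<Rightarrow> 'x \<Rightarrow> 'x) \<Rightarrow> bool" where
  "minimal_tds X act \<longleftrightarrow> tds X act \<and>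
     (\<forall>A. A \<subseteq> X \<and> A \<noteq> {} \<and> closed A \<and> (\<forall>g. act g ` A \<subseteq> A) \<longrightarrow> A = X)"

definition equicontinuous_tds :: "'x::metric_space set \<Rightarrow> ('g::group_add \<Rightarrow> 'x \<Rightarrow> 'x) \<Rightarrow> bool" where
  "equicontinuous_tds X act \<longleftrightarrow> tds X act \<and>
     (\<forall>x\<in>X. \<forall>e>0. \<exists>d>0. \<forall>x'\<in>X. dist x x' < d \<longrightarrow> (\<forall>g. dist (act g x) (act g x') < e))"

definition factor_map ::
  "'x::metric_space set \<Rightarrow> ('g::group_add \<Rightarrow> 'x \<Rightarrow> 'x) \<Rightarrow>
   'z::metric_space set \<Rightarrow> ('g \<Rightarrow> 'z \<Rightarrow> 'z) \<Rightarrow> ('x \<Rightarrow> 'z) \<Rightarrow> bool" where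
  "factor_map X act Z actZ \<theta> \<longleftrightarrow> tds X act \<and> tds Z actZ \<and>
     continuous_on X \<theta> \<and> \<theta> ` X = Z \<and>
     (\<forall>g. \<forall>x\<in>X. \<theta> (act g x) = actZ g (\<theta> x))"

text \<open>Every compact metric space is
homeomorphic to a subset of the Hilbert cube, and equicontinuity is a topological notion
on compact spaces, so all equicontinuous factors are represented (up to conjugacy) by
factors whose phase space lies in the type nat => real (product topology/metric).\<close>
definition max_eq_factor ::
  "'x::metric_space set \<Rightarrow> ('g::group_add \<Rightarrow> 'x \<Rightarrow> 'x) \<Rightarrow>
   'y::metric_space set \<Rightarrow> ('g \<Rightarrow> 'y \<Rightarrow> 'y) \<Rightarrow> ('x \<Rightarrow> 'y) \<Rightarrow> bool" where
  "max_eq_factor X act Xeq actY \<pi> \<longleftrightarrow>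
     factor_map X act Xeq actY \<pi> \<and> equicontinuous_tds Xeq actY \<and>
     (\<forall>(Z :: (nat \<Rightarrow> real) set) actZ \<theta>.
        factor_map X act Z actZ \<theta> \<and> equicontinuous_tds Z actZ \<longrightarrow>
        (\<exists>\<psi>. factor_map Xeq actY Z actZ \<psi> \<and> (\<forall>x\<in>X. \<theta> x = \<psi> (\<pi> x))))"

definition invariant_prob :: "'y::metric_space set \<Rightarrow> ('g \<Rightarrow> 'y \<Rightarrow> 'y) \<Rightarrow> 'y measure \<Rightarrow> bool" where
  "invariant_prob Y actY \<mu> \<longleftrightarrow> prob_space \<mu> \<and> space \<mu> = Y \<and>
     sets \<mu> = sets (restrict_space borel Y) \<and>
     (\<forall>g. \<forall>A\<in>sets \<mu>. measure \<mu> {y\<in>Y. actY g y \<in> A} = measure \<mu> A)"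

definition hausdist :: "'a::metric_space set \<Rightarrow> 'a set \<Rightarrow> real" where
  "hausdist A B = max (SUP a\<in>A. infdist a B) (SUP b\<in>B. infdist b A)"

definition fiber :: "'x set \<Rightarrow> ('x \<Rightarrow> 'y) \<Rightarrow> 'y \<Rightarrow> 'x set" where
  "fiber X \<pi> y = {x\<in>X. \<pi> x = y}"

definition calX :: "'x::metric_space set \<Rightarrow> ('x \<Rightarrow> 'y) \<Rightarrow> 'y set \<Rightarrow> 'x set set" where
  "calX X \<pi> Xeq = {E. E \<subseteq> X \<and> E \<noteq> {} \<and> closed E \<and>
      (\<forall>e>0. \<exists>y\<in>Xeq. hausdist E (fiber X \<pi> y) < e)}"

definition pi_calX :: "('x \<Rightarrow> 'y) \<Rightarrow> 'x set \<Rightarrow> 'y" where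
  "pi_calX \<pi> E = the_elem (\<pi> ` E)"

definition ball_calX :: "'x::metric_space set \<Rightarrow> ('x \<Rightarrow> 'y) \<Rightarrow> 'y set \<Rightarrow> 'x set \<Rightarrow> real \<Rightarrow> 'x set set" where
  "ball_calX X \<pi> Xeq E e = {F\<in>calX X \<pi> Xeq. hausdist E F < e}"

definition calX_meas ::
  "'x::metric_space set \<Rightarrow> ('x \<Rightarrow> 'y) \<Rightarrow> 'y set \<Rightarrow> 'y measure \<Rightarrow> 'x set set" where
  "calX_meas X \<pi> Xeq \<nu> = {E\<in>calX X \<pi> Xeq.
      \<forall>e>0. measure \<nu> (pi_calX \<pi> ` ball_calX X \<pi> Xeq E e) > 0}"

end

(*
  A fibre fails to lie in calX_meas exactly when some d_H-ball around it in calX has a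
  nu-null image under pi_calX.  Approximating fibres by finite subsets of a countable dense
  set and radii by rationals, the complement of Y becomes a countable union of sets
  {y. d_H(E, pi^-1 y) < q}; each is F_sigma in Xeq and contained in the null set
  pi_calX (B_q(E)).  Hence Y is a G_delta of full measure, and it is dense because an
  invariant measure of the minimal factor charges every nonempty open set.

  The real work is the measurability of pi_calX (B_q(E)), without which null sets would be
  invisible to calX_meas (measure is 0 on non-measurable sets): it is a countable union of
  images of closed d_H-balls of calX, and these images are closed by the Blaschke selection
  theorem.
*)
theory Submission
  imports Defs "HOL-Complex_Analysis.Great_Picard"
begin

lemma compact_infdist_attained:
  assumes "compact A" "A \<noteq> {}"
  obtains a where "a \<in> A" "infdist x A = dist x a"
proof -
  have "continuous_on A (dist x)"
    by (intro continuous_intros)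
  then obtain a where a: "a \<in> A" "\<And>b. b \<in> A \<Longrightarrow> dist x a \<le> dist x b"
    using continuous_attains_inf[OF assms] by blast
  then have "infdist x A = dist x a"
    unfolding infdist_notempty[OF assms(2)] by (intro antisym cINF_lower2 cINF_greatest) auto
  with a(1) show ?thesis by (rule that)
qed

lemma infdist_le_hausdist:
  assumes "a \<in> A" "compact A"
  shows "infdist a B \<le> hausdist A B"
proof -
  have "bounded ((\<lambda>a. infdist a B) ` A)"
    by (intro compact_imp_bounded compact_continuous_image continuous_intros assms(2))
  then have "infdist a B \<le> (SUP a\<in>A. infdist a B)"
    using assms(1) by (intro cSUP_upper bounded_imp_bdd_above)
  then show ?thesis unfolding hausdist_def by linarith
qed

lemma hausdist_commute: "hausdist A B = hausdist B A"
  unfolding hausdist_def by (simp add: max.commute)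

lemma hausdist_leI:
  assumes "A \<noteq> {}" "B \<noteq> {}" "\<And>a. a \<in> A \<Longrightarrow> infdist a B \<le> e" "\<And>b. b \<in> B \<Longrightarrow> infdist b A \<le> e"
  shows "hausdist A B \<le> e"
  unfolding hausdist_def using assms by (intro max.boundedI cSUP_least) auto

lemma hausdist_nonneg:
  assumes "A \<noteq> {}" "compact A"
  shows "0 \<le> hausdist A B"
  using assms infdist_le_hausdist[of _ A B] infdist_nonneg by (meson ex_in_conv order_trans)

lemma hausdist_self: "A \<noteq> {} \<Longrightarrow> hausdist A A = 0"
  by (simp add: hausdist_def)

lemma infdist_le_infdist_add:
  assumes "B \<noteq> {}" "\<And>b. b \<in> B \<Longrightarrow> infdist b C \<le> h"
  shows "infdist x C \<le> infdist x B + h"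
proof -
  have "infdist x C - h \<le> dist x b" if "b \<in> B" for b
    using infdist_triangle[of x C b] assms(2)[OF that] by (simp add: dist_commute)
  then have "infdist x C - h \<le> (INF b\<in>B. dist x b)"
    using assms(1) by (intro cINF_greatest) auto
  then show ?thesis unfolding infdist_notempty[OF assms(1)] by linarith
qed

lemma hausdist_triangle:
  assumes "A \<noteq> {}" "B \<noteq> {}" "C \<noteq> {}" "compact A" "compact B" "compact C"
  shows "hausdist A C \<le> hausdist A B + hausdist B C"
proof (rule hausdist_leI)
  fix a assume "a \<in> A"
  have "infdist a C \<le> infdist a B + hausdist B C"
    using assms by (intro infdist_le_infdist_add infdist_le_hausdist)
  also have "infdist a B \<le> hausdist A B"
    using \<open>a \<in> A\<close> assms by (intro infdist_le_hausdist)
  finally show "infdist a C \<le> hausdist A B + hausdist B C" by simp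
next
  fix c assume "c \<in> C"
  have "infdist c A \<le> infdist c B + hausdist B A"
    using assms by (intro infdist_le_infdist_add infdist_le_hausdist)
  also have "infdist c B \<le> hausdist C B"
    using \<open>c \<in> C\<close> assms by (intro infdist_le_hausdist)
  finally show "infdist c A \<le> hausdist A B + hausdist B C"
    by (simp add: hausdist_commute)
qed (use assms in auto)

lemma hausdist_lessE:
  assumes "x \<in> A" "compact A" "compact B" "B \<noteq> {}" "hausdist A B < d"
  obtains b where "b \<in> B" "dist x b < d"
proof -
  obtain b where "b \<in> B" "infdist x B = dist x b"
    using compact_infdist_attained[OF assms(3,4)] by blast
  with infdist_le_hausdist[OF assms(1,2), of B] assms(5) show thesis
    by (intro that[of b]) auto
qed

lemma hausdist_less_iff:
  assumes A: "compact A" "A \<noteq> {}" and B: "compact B" "B \<noteq> {}"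
  shows "hausdist A B < r \<longleftrightarrow> (\<forall>a\<in>A. infdist a B < r) \<and> (\<forall>b\<in>B. infdist b A < r)"
proof
  assume "hausdist A B < r"
  then show "(\<forall>a\<in>A. infdist a B < r) \<and> (\<forall>b\<in>B. infdist b A < r)"
    using infdist_le_hausdist[OF _ A(1), of _ B] infdist_le_hausdist[OF _ B(1), of _ A]
    by (fastforce simp: hausdist_commute)
next
  assume less: "(\<forall>a\<in>A. infdist a B < r) \<and> (\<forall>b\<in>B. infdist b A < r)"
  have "continuous_on A (\<lambda>a. infdist a B)" "continuous_on B (\<lambda>b. infdist b A)"
    by (intro continuous_intros)+
  then obtain a0 b0 where "a0 \<in> A" "\<And>a. a \<in> A \<Longrightarrow> infdist a B \<le> infdist a0 B"
    and "b0 \<in> B" "\<And>b. b \<in> B \<Longrightarrow> infdist b A \<le> infdist b0 A"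
    using continuous_attains_sup[OF A] continuous_attains_sup[OF B] by metis
  then have "hausdist A B \<le> max (infdist a0 B) (infdist b0 A)"
    using A(2) B(2) by (intro hausdist_leI) (auto simp: le_max_iff_disj)
  moreover have "max (infdist a0 B) (infdist b0 A) < r"
    using less \<open>a0 \<in> A\<close> \<open>b0 \<in> B\<close> by simp
  ultimately show "hausdist A B < r" by linarith
qed

lemma compact_all_less_iff_uniform:
  fixes f :: "'a::topological_space \<Rightarrow> real"
  assumes "compact A" "continuous_on A f"
  shows "(\<forall>a\<in>A. f a < r) \<longleftrightarrow> (\<exists>m. \<forall>a\<in>A. f a \<le> r - 1 / Suc m)"
proof
  assume less: "\<forall>a\<in>A. f a < r"
  show "\<exists>m. \<forall>a\<in>A. f a \<le> r - 1 / Suc m"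
  proof (cases "A = {}")
    case False
    then obtain a0 where "a0 \<in> A" "\<And>a. a \<in> A \<Longrightarrow> f a \<le> f a0"
      using continuous_attains_sup[OF assms(1) False assms(2)] by auto
    moreover obtain m where "1 / Suc m < r - f a0"
      using nat_approx_posE[of "r - f a0"] less \<open>a0 \<in> A\<close> by auto
    ultimately have "\<forall>a\<in>A. f a \<le> r - 1 / Suc m" by force
    then show ?thesis ..
  qed simp
next
  assume "\<exists>m. \<forall>a\<in>A. f a \<le> r - 1 / Suc m"
  then obtain m where m: "\<forall>a\<in>A. f a \<le> r - 1 / Suc m" ..
  show "\<forall>a\<in>A. f a < r"
  proof
    fix a assume "a \<in> A"
    with m have "f a \<le> r - 1 / Suc m" ..
    moreover have "0 < 1 / real (Suc m)" by simp
    ultimately show "f a < r" by linarith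
  qed
qed

lemma finite_net_hausdist_le:
  assumes "finite N" "F \<subseteq> (\<Union>d\<in>N. ball d r)" "F \<noteq> {}"
  shows "\<exists>E\<subseteq>N. E \<noteq> {} \<and> hausdist E F \<le> r"
proof -
  define E where "E = {d\<in>N. infdist d F < r}"
  have near: "\<exists>d\<in>E. dist x d < r" if "x \<in> F" for x
  proof -
    obtain d where d: "d \<in> N" "dist d x < r" using assms(2) \<open>x \<in> F\<close> by auto
    moreover have "infdist d F \<le> dist d x" using \<open>x \<in> F\<close> by (rule infdist_le)
    ultimately show ?thesis unfolding E_def by (auto simp: dist_commute)
  qed
  then have "E \<noteq> {}" using assms(3) by blast
  moreover have "hausdist E F \<le> r"
  proof (rule hausdist_leI)
    fix x assume "x \<in> F"
    then obtain d where "d \<in> E" "dist x d < r" using near by blast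
    then show "infdist x E \<le> r" by (meson infdist_le2 less_imp_le)
  qed (use \<open>E \<noteq> {}\<close> assms(3) E_def in auto)
  moreover have "E \<subseteq> N" unfolding E_def by blast
  ultimately show ?thesis by blast
qed

lemma compact_countable_hausdist_approx:
  assumes "compact X"
  obtains D where "countable D" "D \<subseteq> X" "\<And>x e. x \<in> X \<Longrightarrow> e > 0 \<Longrightarrow> \<exists>d\<in>D. dist x d < e"
    "\<And>F e. compact F \<Longrightarrow> F \<noteq> {} \<Longrightarrow> F \<subseteq> X \<Longrightarrow> e > 0 \<Longrightarrow>
       \<exists>E. finite E \<and> E \<noteq> {} \<and> E \<subseteq> D \<and> hausdist E F < e"
proof -
  have "\<forall>n. \<exists>K. finite K \<and> K \<subseteq> X \<and> X \<subseteq> (\<Union>d\<in>K. ball d (1 / Suc n))"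
    using seq_compact_imp_totally_bounded[OF compact_imp_seq_compact[OF assms]] by simp
  then obtain N where "\<forall>n. finite (N n) \<and> N n \<subseteq> X \<and> X \<subseteq> (\<Union>d\<in>N n. ball d (1 / Suc n))"
    by (rule choice[THEN exE])
  then have N: "finite (N n)" "N n \<subseteq> X" "X \<subseteq> (\<Union>d\<in>N n. ball d (1 / Suc n))" for n
    by simp_all
  show thesis
  proof (rule that[of "\<Union>n. N n"])
    show "countable (\<Union>n. N n)" by (rule countable_UN) (auto intro: countable_finite N(1))
    show "(\<Union>n. N n) \<subseteq> X" using N(2) by blast
  next
    fix x and e :: real
    assume "x \<in> X" "e > 0"
    then obtain n where n: "1 / Suc n < e" using nat_approx_posE by blast
    have "x \<in> (\<Union>d\<in>N n. ball d (1 / Suc n))" using N(3) \<open>x \<in> X\<close> ..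
    then obtain d where "d \<in> N n" "dist d x < 1 / Suc n" by auto
    with n have "dist x d < e" by (simp add: dist_commute)
    with \<open>d \<in> N n\<close> show "\<exists>d\<in>(\<Union>n. N n). dist x d < e" by blast
  next
    fix F and e :: real
    assume F: "compact F" "F \<noteq> {}" "F \<subseteq> X" and "e > 0"
    then obtain n where n: "1 / Suc n < e" using nat_approx_posE by blast
    obtain E where "E \<subseteq> N n" "E \<noteq> {}" "hausdist E F \<le> 1 / Suc n"
      using finite_net_hausdist_le[OF N(1) order_trans[OF F(3) N(3)] F(2)] by blast
    moreover from \<open>E \<subseteq> N n\<close> N(1) have "finite E" by (rule finite_subset)
    ultimately show "\<exists>E. finite E \<and> E \<noteq> {} \<and> E \<subseteq> (\<Union>n. N n) \<and> hausdist E F < e"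
      using n by (intro exI[of _ E]) auto
  qed
qed

lemma equilipschitz_uniformly_Cauchy_on:
  fixes f :: "nat \<Rightarrow> 'a::metric_space \<Rightarrow> real"
  assumes "compact X" and dense: "\<And>x e. x \<in> X \<Longrightarrow> e > 0 \<Longrightarrow> \<exists>d\<in>D. dist x d < e"
    and conv: "\<And>d. d \<in> D \<Longrightarrow> convergent (\<lambda>k. f k d)"
    and lip: "\<And>k x y. dist (f k x) (f k y) \<le> dist x y"
  shows "uniformly_Cauchy_on X f"
proof (rule uniformly_Cauchy_onI)
  fix e :: real assume "e > 0"
  have cover: "X \<subseteq> (\<Union>d\<in>D. ball d (e/3))"
  proof
    fix x assume "x \<in> X"
    then obtain d where "d \<in> D" "dist x d < e/3" using dense[of x "e/3"] \<open>e > 0\<close> by auto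
    then show "x \<in> (\<Union>d\<in>D. ball d (e/3))" by (auto simp: dist_commute)
  qed
  obtain C where C: "C \<subseteq> D" "finite C" "X \<subseteq> (\<Union>d\<in>C. ball d (e/3))"
    by (rule compactE_image[OF \<open>compact X\<close> _ cover]) simp
  define L where "L d = lim (\<lambda>k. f k d)" for d
  have "\<forall>d\<in>C. eventually (\<lambda>k. dist (f k d) (L d) < e/6) sequentially"
  proof
    fix d assume "d \<in> C"
    then have "(\<lambda>k. f k d) \<longlonglongrightarrow> L d"
      using C(1) conv unfolding L_def by (auto simp: convergent_LIMSEQ_iff)
    then show "eventually (\<lambda>k. dist (f k d) (L d) < e/6) sequentially"
      by (rule tendstoD) (use \<open>e > 0\<close> in simp)
  qed
  then have "eventually (\<lambda>k. \<forall>d\<in>C. dist (f k d) (L d) < e/6) sequentially"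
    by (rule eventually_ball_finite[OF C(2)])
  then obtain M where M: "\<And>k d. k \<ge> M \<Longrightarrow> d \<in> C \<Longrightarrow> dist (f k d) (L d) < e/6"
    by (auto simp: eventually_sequentially)
  have "dist (f m x) (f n x) < e" if "x \<in> X" "m \<ge> M" "n \<ge> M" for x m n
  proof -
    have "x \<in> (\<Union>d\<in>C. ball d (e/3))" using C(3) \<open>x \<in> X\<close> ..
    then obtain d where d: "d \<in> C" "dist d x < e/3" by auto
    have "dist (f m x) (f m d) < e/3" "dist (f n d) (f n x) < e/3"
      using lip[of m x d] lip[of n d x] d(2) by (simp_all add: dist_commute)
    moreover have "dist (f m d) (f n d) < e/3"
      using M[OF that(2) d(1)] M[OF that(3) d(1)] dist_triangle2[of "f m d" "f n d" "L d"] by linarith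
    ultimately show ?thesis
      using dist_triangle[of "f m x" "f n x" "f m d"] dist_triangle[of "f m d" "f n x" "f n d"] by linarith
  qed
  then show "\<exists>M. \<forall>x\<in>X. \<forall>m\<ge>M. \<forall>n\<ge>M. dist (f m x) (f n x) < e" by blast
qed

lemma compact_small_values_near_zeros:
  fixes g :: "'a::metric_space \<Rightarrow> real"
  assumes "compact X" "continuous_on X g" "e > 0"
  obtains \<delta> where "\<delta> > 0" "\<And>x. x \<in> X \<Longrightarrow> \<bar>g x\<bar> < \<delta> \<Longrightarrow> infdist x {x\<in>X. g x = 0} < e"
proof -
  define K where "K = {x\<in>X. e \<le> infdist x {x\<in>X. g x = 0}}"
  have "closed {x. e \<le> infdist x {x\<in>X. g x = 0}}"
    by (intro closed_Collect_le continuous_intros)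
  then have "compact K"
    unfolding K_def using compact_Int_closed[OF assms(1)] by (simp add: Collect_conj_eq)
  have "\<exists>\<delta>>0. \<forall>x\<in>K. \<delta> \<le> \<bar>g x\<bar>"
  proof (cases "K = {}")
    case False
    have "continuous_on K (\<lambda>x. \<bar>g x\<bar>)"
      unfolding K_def by (intro continuous_intros continuous_on_subset[OF assms(2)]) auto
    then obtain x0 where x0: "x0 \<in> K" "\<And>x. x \<in> K \<Longrightarrow> \<bar>g x0\<bar> \<le> \<bar>g x\<bar>"
      using continuous_attains_inf[OF \<open>compact K\<close> False] by blast
    have "g x0 \<noteq> 0" using x0(1) assms(3) unfolding K_def by auto
    with x0 show ?thesis by (intro exI[of _ "\<bar>g x0\<bar>"]) auto
  qed (auto intro: exI[of _ 1])
  then obtain \<delta> where "\<delta> > 0" "\<And>x. x \<in> K \<Longrightarrow> \<delta> \<le> \<bar>g x\<bar>" by blast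
  then show thesis by (intro that[of \<delta>]) (force simp: K_def)+
qed

lemma uniform_limit_infdist_zero_set_nonempty:
  fixes A :: "nat \<Rightarrow> 'a::metric_space set"
  assumes X: "compact X" and A: "\<And>k. A k \<noteq> {}" "\<And>k. A k \<subseteq> X" and cont: "continuous_on X g"
    and lim: "uniform_limit X (\<lambda>k x. infdist x (A k)) g sequentially"
  shows "{x\<in>X. g x = 0} \<noteq> {}"
proof -
  have "X \<noteq> {}" using A(1)[of 0] A(2)[of 0] by blast
  moreover have "continuous_on X (\<lambda>x. \<bar>g x\<bar>)" using cont by (intro continuous_intros)
  ultimately obtain x0 where x0: "x0 \<in> X" "\<And>x. x \<in> X \<Longrightarrow> \<bar>g x0\<bar> \<le> \<bar>g x\<bar>"
    by (metis continuous_attains_inf[OF X])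
  have "g x0 = 0"
  proof (rule ccontr)
    assume "g x0 \<noteq> 0"
    then obtain N where N: "\<And>x. x \<in> X \<Longrightarrow> \<bar>infdist x (A N) - g x\<bar> < \<bar>g x0\<bar>"
      using uniform_limitD[OF lim, of "\<bar>g x0\<bar>"]
      unfolding eventually_sequentially dist_real_def by auto
    obtain a where "a \<in> A N" using A(1) by blast
    then have "a \<in> X" "infdist a (A N) = 0" using A(2) by auto
    with N[of a] x0(2)[of a] show False by simp
  qed
  with x0(1) show ?thesis by blast
qed

lemma uniform_limit_infdist_hausdist_zero_set:
  fixes A :: "nat \<Rightarrow> 'a::metric_space set"
  assumes X: "compact X" and A: "\<And>k. A k \<noteq> {}" "\<And>k. compact (A k)" "\<And>k. A k \<subseteq> X"
    and cont: "continuous_on X g" and lim: "uniform_limit X (\<lambda>k x. infdist x (A k)) g sequentially"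
  shows "(\<lambda>k. hausdist (A k) {x\<in>X. g x = 0}) \<longlonglongrightarrow> 0"
proof (rule tendstoI)
  define B where "B = {x\<in>X. g x = 0}"
  have "B \<noteq> {}" unfolding B_def by (rule uniform_limit_infdist_zero_set_nonempty[OF X A(1,3) cont lim])
  fix e :: real assume "e > 0"
  then obtain \<delta> where "\<delta> > 0" and \<delta>: "\<And>x. x \<in> X \<Longrightarrow> \<bar>g x\<bar> < \<delta> \<Longrightarrow> infdist x B < e/2"
    using compact_small_values_near_zeros[OF X cont, of "e/2"] unfolding B_def by auto
  have "min \<delta> (e/2) > 0" using \<open>\<delta> > 0\<close> \<open>e > 0\<close> by simp
  then obtain N where N: "\<And>k x. k \<ge> N \<Longrightarrow> x \<in> X \<Longrightarrow> \<bar>infdist x (A k) - g x\<bar> < min \<delta> (e/2)"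
    using uniform_limitD[OF lim] unfolding eventually_sequentially dist_real_def by blast
  have upper: "hausdist (A k) B \<le> e/2" if "k \<ge> N" for k
  proof (rule hausdist_leI)
    fix a assume "a \<in> A k"
    then have "a \<in> X" "infdist a (A k) = 0" using A(3) by auto
    with N[OF that, of a] show "infdist a B \<le> e/2" using \<delta> by fastforce
  next
    fix b assume "b \<in> B"
    with N[OF that, of b] show "infdist b (A k) \<le> e/2" unfolding B_def by auto
  qed (use A(1) \<open>B \<noteq> {}\<close> in auto)
  have "dist (hausdist (A k) B) 0 < e" if "k \<ge> N" for k
    using upper[OF that] hausdist_nonneg[OF A(1,2)] \<open>e > 0\<close> by simp
  then show "eventually (\<lambda>k. dist (hausdist (A k) {x\<in>X. g x = 0}) 0 < e) sequentially"
    unfolding B_def eventually_sequentially by blast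
qed

(* The maps infdist x (A k) are 1-Lipschitz in x, so a diagonal subsequence converging on a
   countable dense set converges uniformly; the Hausdorff limit is the zero set of the limit. *)
theorem Blaschke_selection:
  fixes A :: "nat \<Rightarrow> 'a::metric_space set"
  assumes X: "compact X" and A: "\<And>k. A k \<noteq> {}" "\<And>k. compact (A k)" "\<And>k. A k \<subseteq> X"
  obtains s B where "strict_mono s" "B \<noteq> {}" "closed B" "B \<subseteq> X"
    "(\<lambda>k. hausdist (A (s k)) B) \<longlonglongrightarrow> 0"
proof -
  obtain D where D: "countable D" "D \<subseteq> X"
    and dense: "\<And>x e. x \<in> X \<Longrightarrow> e > 0 \<Longrightarrow> \<exists>d\<in>D. dist x d < e"
    using compact_countable_hausdist_approx[OF X] by metis
  have bound: "norm (infdist x (A k)) \<le> diameter X" if "x \<in> D" for x k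
  proof -
    obtain a where "a \<in> A k" using A(1) by blast
    then have "infdist x (A k) \<le> dist x a" by (rule infdist_le)
    also have "\<dots> \<le> diameter X"
      using \<open>a \<in> A k\<close> A(3) D(2) that by (intro diameter_bounded_bound compact_imp_bounded X) auto
    finally show ?thesis by (simp add: infdist_nonneg)
  qed
  obtain s where s: "strict_mono s" "\<And>x. x \<in> D \<Longrightarrow> \<exists>l. (\<lambda>k. infdist x (A (s k))) \<longlonglongrightarrow> l"
    using function_convergent_subsequence[where f = "\<lambda>k x. infdist x (A k)", OF D(1) bound] by blast
  have "uniformly_Cauchy_on X (\<lambda>k x. infdist x (A (s k)))"
  proof (rule equilipschitz_uniformly_Cauchy_on[OF X dense])
    show "convergent (\<lambda>k. infdist d (A (s k)))" if "d \<in> D" for d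
      using s(2)[OF that] by (simp add: convergent_def)
    show "dist (infdist x (A (s k))) (infdist y (A (s k))) \<le> dist x y" for k x y
      using infdist_triangle_abs by (simp add: dist_real_def)
  qed
  then have "uniformly_convergent_on X (\<lambda>k x. infdist x (A (s k)))"
    by (rule Cauchy_uniformly_convergent)
  then obtain g where lim: "uniform_limit X (\<lambda>k x. infdist x (A (s k))) g sequentially"
    by (auto simp: uniformly_convergent_on_def)
  have "\<forall>\<^sub>F k in sequentially. continuous_on X (\<lambda>x. infdist x (A (s k)))"
    by (intro always_eventually allI continuous_intros)
  then have cont: "continuous_on X g"
    by (rule uniform_limit_theorem[OF _ lim]) simp
  show thesis
  proof (rule that[OF s(1)])
    show "{x\<in>X. g x = 0} \<noteq> {}"
      using uniform_limit_infdist_zero_set_nonempty[OF X A(1,3) cont lim] .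
    show "closed {x\<in>X. g x = 0}"
      by (rule continuous_closed_preimage_constant[OF cont compact_imp_closed[OF X]])
    show "(\<lambda>k. hausdist (A (s k)) {x\<in>X. g x = 0}) \<longlonglongrightarrow> 0"
      using uniform_limit_infdist_hausdist_zero_set[OF X A(1,2,3) cont lim] .
  qed simp
qed

lemma minimal_tdsD:
  "minimal_tds X act \<Longrightarrow> A \<subseteq> X \<Longrightarrow> A \<noteq> {} \<Longrightarrow> closed A \<Longrightarrow> (\<And>g. act g ` A \<subseteq> A) \<Longrightarrow> A = X"
  unfolding minimal_tds_def by blast

lemma minimal_tds_factor:
  assumes min: "minimal_tds X act" and fm: "factor_map X act Z actZ \<theta>"
  shows "minimal_tds Z actZ"
  unfolding minimal_tds_def
proof (intro conjI allI impI)
  have tX: "tds X act" and cont: "continuous_on X \<theta>" and img: "\<theta> ` X = Z"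
    and eqv: "\<And>g x. x \<in> X \<Longrightarrow> \<theta> (act g x) = actZ g (\<theta> x)"
    using fm unfolding factor_map_def by auto
  show "tds Z actZ" using fm unfolding factor_map_def by auto
  fix A assume "A \<subseteq> Z \<and> A \<noteq> {} \<and> closed A \<and> (\<forall>g. actZ g ` A \<subseteq> A)"
  then have A: "A \<subseteq> Z" "A \<noteq> {}" "closed A" "\<forall>g. actZ g ` A \<subseteq> A" by auto
  define B where "B = X \<inter> \<theta> -` A"
  have "B = X"
  proof (rule minimal_tdsD[OF min])
    show "B \<subseteq> X" unfolding B_def by blast
    show "B \<noteq> {}" using A(1,2) img unfolding B_def by blast
    show "closed B"
      unfolding B_def using tX
      by (intro continuous_closed_preimage[OF cont] compact_imp_closed A(3)) (simp add: tds_def)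
    show "act g ` B \<subseteq> B" for g
      using tX A(4) eqv unfolding B_def tds_def by fastforce
  qed
  then show "A = Z" using A(1) img unfolding B_def by blast
qed

lemma invariant_prob_open_Int_sets:
  assumes "invariant_prob Y actY \<nu>" "open V"
  shows "V \<inter> Y \<in> sets \<nu>"
proof -
  have "Y \<inter> V \<in> (\<inter>) Y ` sets borel" using borel_open[OF assms(2)] by (rule imageI)
  with assms(1) show ?thesis
    unfolding invariant_prob_def sets_restrict_space by (simp add: Int_commute)
qed

lemma invariant_prob_null_open_preimage:
  assumes tY: "tds Y actY" and inv: "invariant_prob Y actY \<nu>"
    and V: "open V" "measure \<nu> (V \<inter> Y) = 0"
  obtains W where "open W" "W \<inter> Y = actY g -` V \<inter> Y" "measure \<nu> (W \<inter> Y) = 0"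
proof -
  have "continuous_on Y (actY g)" and actin: "actY g ` Y \<subseteq> Y"
    using tY unfolding tds_def by auto
  then obtain W where W: "open W" "W \<inter> Y = actY g -` V \<inter> Y"
    using V(1) unfolding continuous_on_open_invariant by blast
  have "{y\<in>Y. actY g y \<in> V \<inter> Y} = W \<inter> Y" using W(2) actin by blast
  then have "measure \<nu> (W \<inter> Y) = measure \<nu> (V \<inter> Y)"
    using inv invariant_prob_open_Int_sets[OF inv V(1)] unfolding invariant_prob_def by metis
  with V(2) have "measure \<nu> (W \<inter> Y) = 0" by simp
  with W show thesis by (intro that[of W])
qed

definition measure_support :: "'a::topological_space set \<Rightarrow> 'a measure \<Rightarrow> 'a set" where
  "measure_support Y \<nu> = Y - \<Union>{V. open V \<and> measure \<nu> (V \<inter> Y) = 0}"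

lemma closed_measure_support: "closed Y \<Longrightarrow> closed (measure_support Y \<nu>)"
  unfolding measure_support_def by (intro closed_Diff open_Union) auto

lemma measure_support_nonempty:
  assumes "compact Y" "finite_measure \<nu>" "\<And>V. open V \<Longrightarrow> V \<inter> Y \<in> sets \<nu>" "measure \<nu> Y \<noteq> 0"
  shows "measure_support Y \<nu> \<noteq> {}"
proof
  define \<N> where "\<N> = {V. open V \<and> measure \<nu> (V \<inter> Y) = 0}"
  assume "measure_support Y \<nu> = {}"
  then have "Y \<subseteq> \<Union>\<N>" unfolding measure_support_def \<N>_def by blast
  then obtain \<N>' where \<N>': "\<N>' \<subseteq> \<N>" "finite \<N>'" "Y \<subseteq> \<Union>\<N>'"
    by (rule compactE[OF assms(1)]) (simp add: \<N>_def)
  then have "Y = (\<Union>V\<in>\<N>'. V \<inter> Y)" by blast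
  also have "measure \<nu> \<dots> \<le> (\<Sum>V\<in>\<N>'. measure \<nu> (V \<inter> Y))"
    using \<N>'(1) assms(3) unfolding \<N>_def
    by (intro finite_measure.finite_measure_subadditive_finite[OF assms(2) \<N>'(2)]) auto
  also have "\<dots> = 0" using \<N>'(1) unfolding \<N>_def by (intro sum.neutral) blast
  finally show False using assms(4) by (simp add: measure_le_0_iff)
qed

lemma invariant_prob_measure_support:
  assumes tY: "tds Y actY" and inv: "invariant_prob Y actY \<nu>"
  shows "actY g ` measure_support Y \<nu> \<subseteq> measure_support Y \<nu>"
proof (intro subsetI, elim imageE)
  fix w z assume z: "z \<in> measure_support Y \<nu>" and w: "w = actY g z"
  have "z \<in> Y" using z unfolding measure_support_def by blast
  then have "w \<in> Y" using tY w unfolding tds_def by blast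
  show "w \<in> measure_support Y \<nu>"
  proof (rule ccontr)
    assume "w \<notin> measure_support Y \<nu>"
    then obtain V where "open V" "measure \<nu> (V \<inter> Y) = 0" "actY g z \<in> V"
      using \<open>w \<in> Y\<close> w unfolding measure_support_def by blast
    moreover from this(1,2) obtain W
      where W: "open W" "W \<inter> Y = actY g -` V \<inter> Y" "measure \<nu> (W \<inter> Y) = 0"
      by (rule invariant_prob_null_open_preimage[OF tY inv])
    ultimately have "z \<in> W" using \<open>z \<in> Y\<close> by blast
    with W(1,3) z show False unfolding measure_support_def by blast
  qed
qed

lemma minimal_invariant_prob_open_pos:
  assumes min: "minimal_tds Y actY" and inv: "invariant_prob Y actY \<nu>"
    and "open U" "U \<inter> Y \<noteq> {}"
  shows "measure \<nu> (U \<inter> Y) > 0"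
proof -
  have tY: "tds Y actY" using min unfolding minimal_tds_def by blast
  have "prob_space \<nu>" "space \<nu> = Y" using inv unfolding invariant_prob_def by auto
  then interpret prob_space \<nu> by simp
  have "measure \<nu> Y \<noteq> 0" using prob_space \<open>space \<nu> = Y\<close> by simp
  have "measure_support Y \<nu> = Y"
  proof (rule minimal_tdsD[OF min])
    show "measure_support Y \<nu> \<subseteq> Y" unfolding measure_support_def by blast
    show "measure_support Y \<nu> \<noteq> {}"
      using tY finite_measure_axioms \<open>measure \<nu> Y \<noteq> 0\<close> invariant_prob_open_Int_sets[OF inv]
      unfolding tds_def by (intro measure_support_nonempty) auto
    show "closed (measure_support Y \<nu>)"
      using tY unfolding tds_def by (intro closed_measure_support compact_imp_closed) auto
    show "actY g ` measure_support Y \<nu> \<subseteq> measure_support Y \<nu>" for g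
      by (rule invariant_prob_measure_support[OF tY inv])
  qed
  with \<open>U \<inter> Y \<noteq> {}\<close> \<open>open U\<close> have "measure \<nu> (U \<inter> Y) \<noteq> 0"
    unfolding measure_support_def by blast
  then show ?thesis using measure_nonneg[of \<nu> "U \<inter> Y"] by linarith
qed

lemma closure_diff_null_sets:
  fixes S :: "'a::metric_space set"
  assumes sets: "sets \<nu> = sets (restrict_space borel S)"
    and pos: "\<And>U. open U \<Longrightarrow> U \<inter> S \<noteq> {} \<Longrightarrow> measure \<nu> (U \<inter> S) > 0"
    and null: "N \<in> null_sets \<nu>"
  shows "S \<subseteq> closure (S - N)"
proof
  fix x assume "x \<in> S"
  show "x \<in> closure (S - N)"
    unfolding closure_approachable
  proof (intro allI impI)
    fix e :: real assume "e > 0"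
    show "\<exists>y\<in>S - N. dist y x < e"
    proof (rule ccontr)
      assume "\<not> (\<exists>y\<in>S - N. dist y x < e)"
      then have "ball x e \<inter> S \<subseteq> N" by (auto simp: dist_commute)
      moreover have "S \<inter> ball x e \<in> (\<inter>) S ` sets borel" by (intro imageI borel_open) simp
      then have "ball x e \<inter> S \<in> sets \<nu>" unfolding sets sets_restrict_space by (simp add: Int_commute)
      ultimately have "measure \<nu> (ball x e \<inter> S) = 0"
        using null_sets_subset[OF null] by (auto intro: measure_eq_0_null_sets)
      moreover have "x \<in> ball x e \<inter> S" using \<open>x \<in> S\<close> \<open>e > 0\<close> by simp
      then have "ball x e \<inter> S \<noteq> {}" by blast
      then have "measure \<nu> (ball x e \<inter> S) > 0" by (rule pos[OF open_ball])
      ultimately show False by simp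
    qed
  qed
qed

locale compact_factor =
  fixes X :: "'x::metric_space set" and \<pi> :: "'x \<Rightarrow> 'y::metric_space" and Xeq :: "'y set"
  assumes compact: "compact X" and continuous: "continuous_on X \<pi>" and image: "\<pi> ` X = Xeq"
begin

lemma compact_closed_subset: "closed S \<Longrightarrow> S \<subseteq> X \<Longrightarrow> compact S"
  using compact_Int_closed[OF compact, of S] by (simp add: Int_absorb1 Int_absorb2)

lemma closed_image:
  assumes "closed S"
  shows "closed (\<pi> ` (X \<inter> S))"
proof -
  have "continuous_on (X \<inter> S) \<pi>" by (rule continuous_on_subset[OF continuous]) simp
  from compact_continuous_image[OF this compact_Int_closed[OF compact assms]]
  show ?thesis by (rule compact_imp_closed)
qed

lemma compact_fiber: "compact (fiber X \<pi> y)"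
  unfolding fiber_def
  by (intro compact_closed_subset continuous_closed_preimage_constant[OF continuous]
      compact_imp_closed[OF compact]) auto

lemma fiber_nonempty: "y \<in> Xeq \<Longrightarrow> fiber X \<pi> y \<noteq> {}"
  using image unfolding fiber_def by blast

lemma fiber_in_calX: "y \<in> Xeq \<Longrightarrow> fiber X \<pi> y \<in> calX X \<pi> Xeq"
  using compact_imp_closed[OF compact_fiber] fiber_nonempty hausdist_self[OF fiber_nonempty]
  unfolding calX_def fiber_def by fastforce

lemma calXD:
  assumes "F \<in> calX X \<pi> Xeq"
  shows "compact F" "F \<noteq> {}" "F \<subseteq> X"
  using assms compact_closed_subset unfolding calX_def by auto

lemma pi_calX_fiber:
  assumes "y \<in> Xeq"
  shows "pi_calX \<pi> (fiber X \<pi> y) = y"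
proof -
  have "\<pi> ` fiber X \<pi> y = {y}" using fiber_nonempty[OF assms] unfolding fiber_def by auto
  then show ?thesis by (simp add: pi_calX_def)
qed

lemma calX_near_fiber:
  assumes "F \<in> calX X \<pi> Xeq" "d > 0"
  obtains y where "y \<in> Xeq" "\<And>x. x \<in> F \<Longrightarrow> \<exists>u\<in>fiber X \<pi> y. dist x u < d"
proof -
  obtain y where y: "y \<in> Xeq" "hausdist F (fiber X \<pi> y) < d"
    using assms unfolding calX_def by blast
  have "\<exists>u\<in>fiber X \<pi> y. dist x u < d" if "x \<in> F" for x
    using hausdist_lessE[OF that calXD(1)[OF assms(1)] compact_fiber fiber_nonempty[OF y(1)] y(2)]
    by blast
  with y(1) show thesis by (rule that)
qed

lemma calX_image:
  assumes F: "F \<in> calX X \<pi> Xeq"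
  shows "\<pi> ` F = {pi_calX \<pi> F}" "pi_calX \<pi> F \<in> Xeq"
proof -
  have uc: "uniformly_continuous_on X \<pi>"
    by (rule compact_uniformly_continuous[OF continuous compact])
  have same: "\<pi> x = \<pi> x'" if "x \<in> F" "x' \<in> F" for x x'
  proof (rule ccontr)
    assume "\<pi> x \<noteq> \<pi> x'"
    then have "dist (\<pi> x) (\<pi> x') / 2 > 0" by simp
    with uc obtain d where "d > 0"
      and d: "\<And>u v. u \<in> X \<Longrightarrow> v \<in> X \<Longrightarrow> dist v u < d \<Longrightarrow> dist (\<pi> v) (\<pi> u) < dist (\<pi> x) (\<pi> x') / 2"
      unfolding uniformly_continuous_on_def by metis
    obtain y where y: "\<And>z. z \<in> F \<Longrightarrow> \<exists>u\<in>fiber X \<pi> y. dist z u < d"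
      using calX_near_fiber[OF F \<open>d > 0\<close>] by blast
    have "dist (\<pi> z) y < dist (\<pi> x) (\<pi> x') / 2" if z: "z \<in> F" for z
    proof -
      obtain u where "u \<in> X" "\<pi> u = y" "dist z u < d" using y[OF z] unfolding fiber_def by blast
      with d[of u z] z calXD(3)[OF F] show ?thesis by (auto simp: dist_commute)
    qed
    from this[OF \<open>x \<in> F\<close>] this[OF \<open>x' \<in> F\<close>] show False
      using dist_triangle2[of "\<pi> x" "\<pi> x'" y] by linarith
  qed
  obtain x0 where "x0 \<in> F" using calXD(2)[OF F] by blast
  with same have "\<pi> ` F = {\<pi> x0}" by blast
  moreover have "\<pi> x0 \<in> Xeq" using \<open>x0 \<in> F\<close> calXD(3)[OF F] image by blast
  ultimately show "\<pi> ` F = {pi_calX \<pi> F}" "pi_calX \<pi> F \<in> Xeq" by (simp_all add: pi_calX_def)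
qed

lemma calX_hausdist_limit:
  assumes F: "\<And>k. F k \<in> calX X \<pi> Xeq" and B: "B \<noteq> {}" "closed B" "B \<subseteq> X"
    and lim: "(\<lambda>k. hausdist (F k) B) \<longlonglongrightarrow> 0"
  shows "B \<in> calX X \<pi> Xeq"
  unfolding calX_def
proof (intro CollectI conjI allI impI)
  have "compact B" using compact_closed_subset[OF B(2,3)] .
  fix e :: real assume "e > 0"
  then have "eventually (\<lambda>k. dist (hausdist (F k) B) 0 < e/2) sequentially"
    using lim by (intro tendstoD) simp_all
  then obtain k where "\<forall>n\<ge>k. dist (hausdist (F n) B) 0 < e/2"
    unfolding eventually_sequentially ..
  then have "dist (hausdist (F k) B) 0 < e/2" by (meson order_refl)
  then have k: "hausdist (F k) B < e/2"
    using abs_ge_self[of "hausdist (F k) B"] unfolding dist_real_def by linarith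
  have "\<forall>e>0. \<exists>y\<in>Xeq. hausdist (F k) (fiber X \<pi> y) < e"
    using F[of k] unfolding calX_def by simp
  moreover have "e/2 > 0" using \<open>e > 0\<close> by simp
  ultimately obtain y where y: "y \<in> Xeq" "hausdist (F k) (fiber X \<pi> y) < e/2" by blast
  have "hausdist B (fiber X \<pi> y) \<le> hausdist B (F k) + hausdist (F k) (fiber X \<pi> y)"
    by (rule hausdist_triangle[OF B(1) calXD(2)[OF F] fiber_nonempty[OF y(1)]
          \<open>compact B\<close> calXD(1)[OF F] compact_fiber])
  with k y(2) have "hausdist B (fiber X \<pi> y) < e" by (simp add: hausdist_commute)
  with y(1) show "\<exists>y\<in>Xeq. hausdist B (fiber X \<pi> y) < e" by blast
qed (use B in auto)

lemma pi_calX_hausdist_tendsto: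
  assumes F: "\<And>k. F k \<in> calX X \<pi> Xeq" and B: "B \<in> calX X \<pi> Xeq"
    and lim: "(\<lambda>k. hausdist (F k) B) \<longlonglongrightarrow> 0"
  shows "(\<lambda>k. pi_calX \<pi> (F k)) \<longlonglongrightarrow> pi_calX \<pi> B"
proof -
  obtain b where "b \<in> B" using calXD(2)[OF B] by blast
  have "\<forall>k. \<exists>u\<in>F k. infdist b (F k) = dist b u"
    using compact_infdist_attained[OF calXD(1,2)[OF F]] by metis
  then obtain u where u: "\<And>k. u k \<in> F k" "\<And>k. infdist b (F k) = dist b (u k)"
    by metis
  have "dist (u k) b \<le> hausdist (F k) B" for k
    using infdist_le_hausdist[OF \<open>b \<in> B\<close> calXD(1)[OF B], of "F k"] u(2)[of k]
    by (simp add: hausdist_commute dist_commute)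
  then have "(\<lambda>k. dist (u k) b) \<longlonglongrightarrow> 0"
    by (intro Lim_null_comparison[OF _ lim] always_eventually) simp
  then have "u \<longlonglongrightarrow> b" by (rule tendsto_dist_iff[THEN iffD2])
  moreover have "b \<in> X" "\<And>k. u k \<in> X" using \<open>b \<in> B\<close> u(1) calXD(3)[OF B] calXD(3)[OF F] by blast+
  ultimately have "(\<lambda>k. \<pi> (u k)) \<longlonglongrightarrow> \<pi> b"
    by (intro continuous_on_tendsto_compose[OF continuous] always_eventually) auto
  moreover have "\<pi> (u k) = pi_calX \<pi> (F k)" for k using calX_image(1)[OF F] u(1)[of k] by blast
  moreover have "\<pi> b = pi_calX \<pi> B" using calX_image(1)[OF B] \<open>b \<in> B\<close> by blast
  ultimately show ?thesis by simp
qed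

lemma closed_pi_calX_hausdist_le:
  assumes E: "compact E" "E \<noteq> {}"
  shows "closed (pi_calX \<pi> ` {F \<in> calX X \<pi> Xeq. hausdist E F \<le> s})"
  unfolding closed_sequential_limits
proof (intro allI impI, elim conjE)
  fix ys l
  assume ys: "\<forall>n. ys n \<in> pi_calX \<pi> ` {F \<in> calX X \<pi> Xeq. hausdist E F \<le> s}" and "ys \<longlonglongrightarrow> l"
  then have "\<forall>n. \<exists>F. F \<in> calX X \<pi> Xeq \<and> hausdist E F \<le> s \<and> ys n = pi_calX \<pi> F"
    by (auto simp: image_iff)
  then obtain F where "\<forall>n. F n \<in> calX X \<pi> Xeq \<and> hausdist E (F n) \<le> s \<and> ys n = pi_calX \<pi> (F n)"
    by (rule choice[THEN exE])
  then have F: "\<And>n. F n \<in> calX X \<pi> Xeq" "\<And>n. hausdist E (F n) \<le> s"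
    "\<And>n. ys n = pi_calX \<pi> (F n)"
    by simp_all
  obtain \<sigma> B where \<sigma>: "strict_mono \<sigma>" and B: "B \<noteq> {}" "closed B" "B \<subseteq> X"
    and lim: "(\<lambda>k. hausdist (F (\<sigma> k)) B) \<longlonglongrightarrow> 0"
    using Blaschke_selection[OF compact, of F] calXD[OF F(1)] by metis
  have "B \<in> calX X \<pi> Xeq" using calX_hausdist_limit[OF F(1) B lim] .
  have "hausdist E B \<le> s + hausdist (F (\<sigma> k)) B" for k
    using hausdist_triangle[OF E(2) calXD(2)[OF F(1)[of "\<sigma> k"]] B(1) E(1)
        calXD(1)[OF F(1)[of "\<sigma> k"]] calXD(1)[OF \<open>B \<in> _\<close>]]
      F(2)[of "\<sigma> k"] by linarith
  then have "hausdist E B \<le> s"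
    using LIMSEQ_le_const[OF tendsto_add[OF tendsto_const lim, of s]] by auto
  moreover have "(\<lambda>k. ys (\<sigma> k)) \<longlonglongrightarrow> pi_calX \<pi> B"
    unfolding F(3) by (rule pi_calX_hausdist_tendsto[OF F(1) \<open>B \<in> _\<close> lim])
  then have "pi_calX \<pi> B = l"
    using LIMSEQ_unique LIMSEQ_subseq_LIMSEQ[OF \<open>ys \<longlonglongrightarrow> l\<close> \<sigma>] by (auto simp: comp_def)
  ultimately show "l \<in> pi_calX \<pi> ` {F \<in> calX X \<pi> Xeq. hausdist E F \<le> s}"
    using \<open>B \<in> _\<close> by blast
qed

lemma pi_calX_ball_calX_sets:
  assumes "compact E" "E \<noteq> {}"
  shows "pi_calX \<pi> ` ball_calX X \<pi> Xeq E r \<in> sets (restrict_space borel Xeq)"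
proof -
  let ?C = "\<lambda>m::nat. pi_calX \<pi> ` {F \<in> calX X \<pi> Xeq. hausdist E F \<le> r - 1 / Suc m}"
  have ball_eq: "pi_calX \<pi> ` ball_calX X \<pi> Xeq E r = (\<Union>m. ?C m)"
  proof (intro equalityI subsetI)
    fix y assume "y \<in> pi_calX \<pi> ` ball_calX X \<pi> Xeq E r"
    then obtain F where F: "F \<in> calX X \<pi> Xeq" "hausdist E F < r" "y = pi_calX \<pi> F"
      unfolding ball_calX_def by blast
    obtain m where "1 / Suc m < r - hausdist E F"
      using nat_approx_posE[of "r - hausdist E F"] F(2) by auto
    then have "hausdist E F \<le> r - 1 / Suc m" by linarith
    with F(1,3) show "y \<in> (\<Union>m. ?C m)" by blast
  next
    fix y assume "y \<in> (\<Union>m. ?C m)"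
    then obtain m F where F: "F \<in> calX X \<pi> Xeq" "hausdist E F \<le> r - 1 / Suc m" "y = pi_calX \<pi> F"
      by blast
    have "0 < 1 / real (Suc m)" by simp
    with F(2) have "hausdist E F < r" by linarith
    with F(1,3) show "y \<in> pi_calX \<pi> ` ball_calX X \<pi> Xeq E r"
      unfolding ball_calX_def by blast
  qed
  have C_sets: "?C m \<in> sets (restrict_space borel Xeq)" for m
  proof -
    have "?C m \<subseteq> Xeq" using calX_image(2) by blast
    then have "?C m = Xeq \<inter> ?C m" by blast
    also have "\<dots> \<in> (\<inter>) Xeq ` sets borel"
      using closed_pi_calX_hausdist_le[OF assms] by (intro imageI borel_closed)
    finally show ?thesis unfolding sets_restrict_space .
  qed
  show ?thesis
    unfolding ball_eq by (intro sets.countable_UN) (use C_sets in blast)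
qed

lemma ball_calX_mono:
  assumes "compact E" "E \<noteq> {}" "compact E'" "E' \<noteq> {}" "hausdist E' E + r \<le> r'"
  shows "ball_calX X \<pi> Xeq E r \<subseteq> ball_calX X \<pi> Xeq E' r'"
proof
  fix F assume "F \<in> ball_calX X \<pi> Xeq E r"
  then have F: "F \<in> calX X \<pi> Xeq" "hausdist E F < r" unfolding ball_calX_def by auto
  have "hausdist E' F \<le> hausdist E' E + hausdist E F"
    using hausdist_triangle[of E' E F] assms calXD[OF F(1)] by simp
  with F assms(5) show "F \<in> ball_calX X \<pi> Xeq E' r'" unfolding ball_calX_def by simp
qed

lemma infdist_fiber_le_iff:
  assumes "y \<in> Xeq"
  shows "infdist a (fiber X \<pi> y) \<le> s \<longleftrightarrow> y \<in> \<pi> ` (X \<inter> cball a s)"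
proof
  assume "infdist a (fiber X \<pi> y) \<le> s"
  moreover obtain u where "u \<in> fiber X \<pi> y" "infdist a (fiber X \<pi> y) = dist a u"
    using compact_infdist_attained[OF compact_fiber fiber_nonempty[OF assms]] by blast
  ultimately show "y \<in> \<pi> ` (X \<inter> cball a s)"
    unfolding fiber_def by (intro image_eqI[of y \<pi> u]) auto
next
  assume "y \<in> \<pi> ` (X \<inter> cball a s)"
  then obtain u where "u \<in> fiber X \<pi> y" "dist a u \<le> s" unfolding fiber_def by auto
  then show "infdist a (fiber X \<pi> y) \<le> s" by (rule infdist_le2)
qed

lemma hausdist_fiber_less_eq:
  assumes E: "compact E" "E \<noteq> {}"
  shows "{y\<in>Xeq. hausdist E (fiber X \<pi> y) < r} =
    (Xeq - \<pi> ` (X \<inter> {x. r \<le> infdist x E})) \<inter> (\<Union>m. \<Inter>a\<in>E. \<pi> ` (X \<inter> cball a (r - 1 / Suc m)))"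
proof -
  have "hausdist E (fiber X \<pi> y) < r \<longleftrightarrow>
      (\<exists>m. \<forall>a\<in>E. y \<in> \<pi> ` (X \<inter> cball a (r - 1 / Suc m))) \<and> y \<notin> \<pi> ` (X \<inter> {x. r \<le> infdist x E})"
    if "y \<in> Xeq" for y
  proof -
    have "hausdist E (fiber X \<pi> y) < r \<longleftrightarrow>
        (\<forall>a\<in>E. infdist a (fiber X \<pi> y) < r) \<and> (\<forall>x\<in>fiber X \<pi> y. infdist x E < r)"
      by (rule hausdist_less_iff[OF E compact_fiber fiber_nonempty[OF that]])
    also have "(\<forall>a\<in>E. infdist a (fiber X \<pi> y) < r) \<longleftrightarrow>
        (\<exists>m. \<forall>a\<in>E. infdist a (fiber X \<pi> y) \<le> r - 1 / Suc m)"
      by (rule compact_all_less_iff_uniform[OF E(1)]) (intro continuous_intros)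
    also have "\<dots> \<longleftrightarrow> (\<exists>m. \<forall>a\<in>E. y \<in> \<pi> ` (X \<inter> cball a (r - 1 / Suc m)))"
      by (simp add: infdist_fiber_le_iff[OF that])
    also have "(\<forall>x\<in>fiber X \<pi> y. infdist x E < r) \<longleftrightarrow> y \<notin> \<pi> ` (X \<inter> {x. r \<le> infdist x E})"
      unfolding fiber_def by (auto simp: not_le)
    finally show ?thesis .
  qed
  then show ?thesis by auto
qed

lemma hausdist_fiber_less_fsigma_sets:
  assumes "compact E" "E \<noteq> {}"
  shows "fsigma_in (top_of_set Xeq) {y\<in>Xeq. hausdist E (fiber X \<pi> y) < r}"
    and "{y\<in>Xeq. hausdist E (fiber X \<pi> y) < r} \<in> sets (restrict_space borel Xeq)"
proof -
  define C where "C = \<pi> ` (X \<inter> {x. r \<le> infdist x E})"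
  define Q where "Q m = (\<Inter>a\<in>E. \<pi> ` (X \<inter> cball a (r - 1 / Suc m)))" for m :: nat
  have eq: "{y\<in>Xeq. hausdist E (fiber X \<pi> y) < r} = Xeq \<inter> (- C \<inter> (\<Union>m. Q m))"
    unfolding hausdist_fiber_less_eq[OF assms] C_def Q_def by blast
  have "closed C"
    unfolding C_def by (intro closed_image closed_Collect_le continuous_intros)
  have "closed (Q m)" for m
    unfolding Q_def by (intro closed_INT ballI closed_image closed_cball)
  have "fsigma_in (top_of_set Xeq) (Xeq \<inter> - C)"
    using \<open>closed C\<close>
    by (intro open_imp_fsigma_in metrizable_space_subtopology metrizable_space_euclidean
        openin_open_Int) auto
  moreover have "fsigma_in (top_of_set Xeq) (\<Union>m. Xeq \<inter> Q m)"
    using \<open>\<And>m. closed (Q m)\<close>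
    by (intro fsigma_in_Union) (auto intro: closed_imp_fsigma_in closedin_closed_Int)
  moreover have "Xeq \<inter> (- C \<inter> (\<Union>m. Q m)) = (Xeq \<inter> - C) \<inter> (\<Union>m. Xeq \<inter> Q m)" by blast
  ultimately show "fsigma_in (top_of_set Xeq) {y\<in>Xeq. hausdist E (fiber X \<pi> y) < r}"
    unfolding eq by (metis fsigma_in_Int)
  have "- C \<inter> (\<Union>m. Q m) \<in> sets borel"
    using \<open>closed C\<close> \<open>\<And>m. closed (Q m)\<close> by (intro sets.Int borel_open sets.countable_UN) auto
  then show "{y\<in>Xeq. hausdist E (fiber X \<pi> y) < r} \<in> sets (restrict_space borel Xeq)"
    unfolding eq sets_restrict_space by (rule imageI)
qed

lemma measure_pi_calX_ball_calX_mono: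
  assumes "sets \<nu> = sets (restrict_space borel Xeq)" "finite_measure \<nu>"
    and "compact E" "E \<noteq> {}" "compact E'" "E' \<noteq> {}" "hausdist E' E + r \<le> r'"
  shows "measure \<nu> (pi_calX \<pi> ` ball_calX X \<pi> Xeq E r) \<le> measure \<nu> (pi_calX \<pi> ` ball_calX X \<pi> Xeq E' r')"
  using assms(1) pi_calX_ball_calX_sets[OF assms(5,6)] ball_calX_mono[OF assms(3-7)]
  by (intro finite_measure.finite_measure_mono[OF assms(2)] image_mono) auto

lemma fiber_notin_calX_meas_iff:
  assumes \<nu>: "sets \<nu> = sets (restrict_space borel Xeq)" "finite_measure \<nu>"
    and approx: "\<And>F e. compact F \<Longrightarrow> F \<noteq> {} \<Longrightarrow> F \<subseteq> X \<Longrightarrow> e > 0 \<Longrightarrow>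
       \<exists>E. finite E \<and> E \<noteq> {} \<and> E \<subseteq> D \<and> hausdist E F < e"
    and y: "y \<in> Xeq"
  shows "fiber X \<pi> y \<notin> calX_meas X \<pi> Xeq \<nu> \<longleftrightarrow>
    (\<exists>E q. finite E \<and> E \<noteq> {} \<and> E \<subseteq> D \<and> q \<in> \<rat> \<and>
       measure \<nu> (pi_calX \<pi> ` ball_calX X \<pi> Xeq E q) = 0 \<and> hausdist E (fiber X \<pi> y) < q)"
    (is "_ \<longleftrightarrow> ?approx")
proof
  let ?F = "fiber X \<pi> y"
  have F: "compact ?F" "?F \<noteq> {}" using compact_fiber fiber_nonempty[OF y] .
  assume "?F \<notin> calX_meas X \<pi> Xeq \<nu>"
  then obtain e where "e > 0" and "\<not> measure \<nu> (pi_calX \<pi> ` ball_calX X \<pi> Xeq ?F e) > 0"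
    using fiber_in_calX[OF y] unfolding calX_meas_def by blast
  then have null: "measure \<nu> (pi_calX \<pi> ` ball_calX X \<pi> Xeq ?F e) = 0"
    using measure_nonneg[of \<nu>] by (meson antisym not_less)
  obtain E where E: "finite E" "E \<noteq> {}" "E \<subseteq> D" "hausdist E ?F < e/3"
    using approx[OF F _ , of "e/3"] \<open>e > 0\<close> unfolding fiber_def by auto
  obtain q where q: "q \<in> \<rat>" "e/3 < q" "q < 2*e/3"
    using Rats_dense_in_real[of "e/3" "2*e/3"] \<open>e > 0\<close> by auto
  have "measure \<nu> (pi_calX \<pi> ` ball_calX X \<pi> Xeq E q) \<le> measure \<nu> (pi_calX \<pi> ` ball_calX X \<pi> Xeq ?F e)"
    using E(4) q by (intro measure_pi_calX_ball_calX_mono[OF \<nu> finite_imp_compact[OF E(1)] E(2) F])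
      (simp add: hausdist_commute)
  with null have "measure \<nu> (pi_calX \<pi> ` ball_calX X \<pi> Xeq E q) = 0"
    using measure_nonneg[of \<nu> "pi_calX \<pi> ` ball_calX X \<pi> Xeq E q"] by linarith
  with E q show ?approx by (intro exI[of _ E] exI[of _ q]) auto
next
  assume ?approx
  then obtain E q where E: "finite E" "E \<noteq> {}"
    and null: "measure \<nu> (pi_calX \<pi> ` ball_calX X \<pi> Xeq E q) = 0"
    and q: "hausdist E (fiber X \<pi> y) < q" by blast
  define e where "e = q - hausdist E (fiber X \<pi> y)"
  have "measure \<nu> (pi_calX \<pi> ` ball_calX X \<pi> Xeq (fiber X \<pi> y) e) \<le> 0"
    using measure_pi_calX_ball_calX_mono[OF \<nu> compact_fiber fiber_nonempty[OF y]
        finite_imp_compact[OF E(1)] E(2), of e q] null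
    by (simp add: e_def)
  moreover have "e > 0" using q by (simp add: e_def)
  ultimately show "fiber X \<pi> y \<notin> calX_meas X \<pi> Xeq \<nu>"
    unfolding calX_meas_def by (auto simp: not_less)
qed

lemma hausdist_fiber_less_null:
  assumes \<nu>: "sets \<nu> = sets (restrict_space borel Xeq)" "finite_measure \<nu>"
    and E: "compact E" "E \<noteq> {}" and null: "measure \<nu> (pi_calX \<pi> ` ball_calX X \<pi> Xeq E q) = 0"
  shows "{y\<in>Xeq. hausdist E (fiber X \<pi> y) < q} \<in> null_sets \<nu>"
proof -
  have "pi_calX \<pi> ` ball_calX X \<pi> Xeq E q \<in> null_sets \<nu>"
    using pi_calX_ball_calX_sets[OF E] null \<nu>
    by (intro null_setsI) (simp_all add: finite_measure.emeasure_eq_measure)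
  moreover have "{y\<in>Xeq. hausdist E (fiber X \<pi> y) < q} \<in> sets \<nu>"
    unfolding \<nu>(1) by (rule hausdist_fiber_less_fsigma_sets(2)[OF E])
  moreover have "{y\<in>Xeq. hausdist E (fiber X \<pi> y) < q} \<subseteq> pi_calX \<pi> ` ball_calX X \<pi> Xeq E q"
  proof
    fix y assume "y \<in> {y\<in>Xeq. hausdist E (fiber X \<pi> y) < q}"
    then have "y \<in> Xeq" "fiber X \<pi> y \<in> ball_calX X \<pi> Xeq E q"
      unfolding ball_calX_def using fiber_in_calX by auto
    then show "y \<in> pi_calX \<pi> ` ball_calX X \<pi> Xeq E q"
      using pi_calX_fiber by (metis imageI)
  qed
  ultimately show ?thesis by (rule null_sets_subset)
qed

lemma non_calX_meas_fibers_null_fsigma: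
  assumes \<nu>: "sets \<nu> = sets (restrict_space borel Xeq)" "finite_measure \<nu>"
  shows "{y\<in>Xeq. fiber X \<pi> y \<notin> calX_meas X \<pi> Xeq \<nu>} \<in> null_sets \<nu>"
    and "fsigma_in (top_of_set Xeq) {y\<in>Xeq. fiber X \<pi> y \<notin> calX_meas X \<pi> Xeq \<nu>}"
proof -
  obtain D where D: "countable D" "D \<subseteq> X" and approx:
    "\<And>F e. compact F \<Longrightarrow> F \<noteq> {} \<Longrightarrow> F \<subseteq> X \<Longrightarrow> e > 0 \<Longrightarrow>
       \<exists>E. finite E \<and> E \<noteq> {} \<and> E \<subseteq> D \<and> hausdist E F < e"
    using compact_countable_hausdist_approx[OF compact] by metis
  define \<P> where "\<P> = {(E, q). finite E \<and> E \<noteq> {} \<and> E \<subseteq> D \<and> q \<in> \<rat> \<and>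
    measure \<nu> (pi_calX \<pi> ` ball_calX X \<pi> Xeq E q) = 0}"
  define T where "T = (\<lambda>(E, q). {y\<in>Xeq. hausdist E (fiber X \<pi> y) < q})"
  have eq: "{y\<in>Xeq. fiber X \<pi> y \<notin> calX_meas X \<pi> Xeq \<nu>} = (\<Union>p\<in>\<P>. T p)"
    using fiber_notin_calX_meas_iff[OF \<nu> approx] unfolding \<P>_def T_def by auto
  have "\<P> \<subseteq> {E. finite E \<and> E \<subseteq> D} \<times> \<rat>" unfolding \<P>_def by auto
  then have "countable \<P>"
    by (rule countable_subset) (intro countable_SIGMA countable_Collect_finite_subset D(1) countable_rat)
  have T: "T p \<in> null_sets \<nu>" "fsigma_in (top_of_set Xeq) (T p)" if "p \<in> \<P>" for p
  proof -
    obtain E q where p: "p = (E, q)" "finite E" "E \<noteq> {}"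
      and null: "measure \<nu> (pi_calX \<pi> ` ball_calX X \<pi> Xeq E q) = 0"
      using \<open>p \<in> \<P>\<close> unfolding \<P>_def by blast
    have E: "compact E" "E \<noteq> {}" using finite_imp_compact[OF p(2)] p(3) .
    show "T p \<in> null_sets \<nu>"
      unfolding T_def p(1) using hausdist_fiber_less_null[OF \<nu> E null] by simp
    show "fsigma_in (top_of_set Xeq) (T p)"
      unfolding T_def p(1) using hausdist_fiber_less_fsigma_sets(1)[OF E] by simp
  qed
  show "{y\<in>Xeq. fiber X \<pi> y \<notin> calX_meas X \<pi> Xeq \<nu>} \<in> null_sets \<nu>"
    unfolding eq using \<open>countable \<P>\<close> T(1) by (rule null_sets_UN')
  show "fsigma_in (top_of_set Xeq) {y\<in>Xeq. fiber X \<pi> y \<notin> calX_meas X \<pi> Xeq \<nu>}"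
    unfolding eq using \<open>countable \<P>\<close> T(2) by (intro fsigma_in_Union) auto
qed

end

theorem lemma3p2:
  fixes X :: "'x::metric_space set" and act :: "'g::{group_add,countable} \<Rightarrow> 'x \<Rightarrow> 'x"
    and Xeq :: "'y::metric_space set" and actY :: "'g \<Rightarrow> 'y \<Rightarrow> 'y"
    and \<pi> :: "'x \<Rightarrow> 'y" and \<nu> :: "'y measure"
  assumes "infinite (UNIV :: 'g set)"
    and "minimal_tds X act"
    and "max_eq_factor X act Xeq actY \<pi>"
    and "invariant_prob Xeq actY \<nu>"
    and "\<forall>\<mu>. invariant_prob Xeq actY \<mu> \<longrightarrow> \<mu> = \<nu>"
  defines "Y \<equiv> {y\<in>Xeq. fiber X \<pi> y \<in> calX_meas X \<pi> Xeq \<nu>}"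
  shows "Xeq \<subseteq> closure Y \<and> gdelta_in (top_of_set Xeq) Y \<and> Y \<in> sets \<nu> \<and> measure \<nu> Y = 1"
proof -
  have fm: "factor_map X act Xeq actY \<pi>" using assms(3) unfolding max_eq_factor_def by blast
  then interpret compact_factor X \<pi> Xeq unfolding factor_map_def tds_def by unfold_locales auto
  have "prob_space \<nu>" and sets: "sets \<nu> = sets (restrict_space borel Xeq)" and "space \<nu> = Xeq"
    using assms(4) unfolding invariant_prob_def by auto
  interpret prob_space \<nu> by fact
  define N where "N = {y\<in>Xeq. fiber X \<pi> y \<notin> calX_meas X \<pi> Xeq \<nu>}"
  have N: "N \<in> null_sets \<nu>" "fsigma_in (top_of_set Xeq) N"
    unfolding N_def using non_calX_meas_fibers_null_fsigma[OF sets finite_measure_axioms] by auto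
  have Y: "Y = space \<nu> - N" unfolding Y_def N_def \<open>space \<nu> = Xeq\<close> by blast
  have "Xeq \<subseteq> closure Y"
    unfolding Y \<open>space \<nu> = Xeq\<close>
    using minimal_invariant_prob_open_pos[OF minimal_tds_factor[OF assms(2) fm] assms(4)]
    by (rule closure_diff_null_sets[OF sets _ N(1)])
  moreover have "Xeq - (Xeq - N) = N" unfolding N_def by blast
  then have "gdelta_in (top_of_set Xeq) Y"
    unfolding Y \<open>space \<nu> = Xeq\<close> gdelta_in_fsigma_in using N(2) by simp
  moreover have "Y \<in> sets \<nu>" unfolding Y using N(1) by auto
  moreover have "measure \<nu> Y = 1"
    unfolding Y using prob_compl[OF null_setsD2[OF N(1)]] N(1) by (simp add: measure_eq_0_null_sets)
  ultimately show ?thesis by blast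
qed

end
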